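(* Every element of $PSL(2,\mathbb H(\mathbb Z))$, i.e. every transformation $q\mapsto(aq+b)(cq+d)^{-1}$ induced by an invertible matrix $\begin{pmatrix}a&b\\c&d\end{pmatrix}$ with entries in the Lipschitz integers $\mathbb H(\mathbb Z)$, which satisfies the (BG) conditions belongs to the Lipschitz quaternionic modular group $PSL(2,\mathfrak L)$.
   Context: $\mathbb H(\mathbb Z)=\{a+b\mathbf i+c\mathbf j+d\mathbf k:a,b,c,d\in\mathbb Z\}$ (Lipschitz integers). A quaternionic matrix $A$ satisfies the (BG) conditions if $\bar A^tKA=K$, $K=\begin{pmatrix}0&1\\1&0\end{pmatrix}$, equivalently $\Re(a\bar c)=0$, $\Re(b\bar d)=0$, $\bar bc+\bar da=1$; these are exactly the matrices inducing orientation-preserving isometries of $\mathbf H^1_{\mathbb H}=\{q:\Re q>0\}$. $PSL(2,\mathfrak L)$ is the group generated by $T(q)=q^{-1}$ and the translations $q\mapsto q+\omega$, $\omega\in\{b\mathbf i+c\mathbf j+d\mathbf k:b,c,d\in\mathbb Z\}$. *)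

theory Defs
  imports Complex_Main
begin

datatype quat = Quat (Re: real) (Im1: real) (Im2: real) (Im3: real)

lemma quat_eq_iff: "x = y \<longleftrightarrow> Re x = Re y \<and> Im1 x = Im1 y \<and> Im2 x = Im2 y \<and> Im3 x = Im3 y"
  by (cases x; cases y) auto

instantiation quat :: ab_group_add
begin
definition "0 = Quat 0 0 0 0"
definition "x + y = Quat (Re x + Re y) (Im1 x + Im1 y) (Im2 x + Im2 y) (Im3 x + Im3 y)"
definition "- x = Quat (- Re x) (- Im1 x) (- Im2 x) (- Im3 x)"
definition "x - y = Quat (Re x - Re y) (Im1 x - Im1 y) (Im2 x - Im2 y) (Im3 x - Im3 y)"
instance by standard (simp_all add: quat_eq_iff zero_quat_def plus_quat_def uminus_quat_def minus_quat_def)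
end

instantiation quat :: ring_1
begin
definition "1 = Quat 1 0 0 0"
definition "x * y = Quat
  (Re x * Re y - Im1 x * Im1 y - Im2 x * Im2 y - Im3 x * Im3 y)
  (Re x * Im1 y + Im1 x * Re y + Im2 x * Im3 y - Im3 x * Im2 y)
  (Re x * Im2 y - Im1 x * Im3 y + Im2 x * Re y + Im3 x * Im1 y)
  (Re x * Im3 y + Im1 x * Im2 y - Im2 x * Im1 y + Im3 x * Re y)"
instance by standard
  (simp_all add: quat_eq_iff zero_quat_def plus_quat_def one_quat_def times_quat_def algebra_simps)
end

definition qnorm2 :: "quat \<Rightarrow> real" where
  "qnorm2 x = (Re x)\<^sup>2 + (Im1 x)\<^sup>2 + (Im2 x)\<^sup>2 + (Im3 x)\<^sup>2"

definition cnj :: "quat \<Rightarrow> quat" where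
  "cnj x = Quat (Re x) (- Im1 x) (- Im2 x) (- Im3 x)"

instantiation quat :: division_ring
begin
definition "inverse x = Quat (Re x / qnorm2 x) (- Im1 x / qnorm2 x) (- Im2 x / qnorm2 x) (- Im3 x / qnorm2 x)"
definition "x div (y::quat) = x * inverse y"
instance
proof
  fix x y :: quat
  assume "x \<noteq> 0"
  then have n: "qnorm2 x \<noteq> 0"
    by (auto simp: qnorm2_def quat_eq_iff zero_quat_def add_nonneg_eq_0_iff)
  define N where "N = qnorm2 x"
  have N: "N = (Re x)\<^sup>2 + (Im1 x)\<^sup>2 + (Im2 x)\<^sup>2 + (Im3 x)\<^sup>2" "N \<noteq> 0"
    using n by (simp_all add: N_def qnorm2_def)
  show "inverse x * x = 1" "x * inverse x = 1"
    unfolding quat_eq_iff inverse_quat_def times_quat_def one_quat_def N_def[symmetric]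
    using N by (simp_all add: divide_simps, simp_all add: power2_eq_square algebra_simps)
next
  fix x y :: quat show "x div y = x * inverse y" by (simp add: divide_quat_def)
next
  show "inverse (0::quat) = 0" by (simp add: inverse_quat_def zero_quat_def quat_eq_iff)
qed
end

definition lipschitz :: "quat \<Rightarrow> bool" where
  "lipschitz q \<longleftrightarrow> Re q \<in> \<int> \<and> Im1 q \<in> \<int> \<and> Im2 q \<in> \<int> \<and> Im3 q \<in> \<int>"

definition lipschitz_imag :: "quat \<Rightarrow> bool" where
  "lipschitz_imag w \<longleftrightarrow> lipschitz w \<and> Re w = 0"

text \<open>(BG): \<open>conj(A)^t K A = K\<close> with \<open>A = [[a,b],[c,d]]\<close>, \<open>K = [[0,1],[1,0]]\<close>,
  written out entrywise.\<close>
definition BG :: "quat \<Rightarrow> quat \<Rightarrow> quat \<Rightarrow> quat \<Rightarrow> bool" where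
  "BG a b c d \<longleftrightarrow>
     cnj a * c + cnj c * a = 0 \<and> cnj a * d + cnj c * b = 1 \<and>
     cnj b * c + cnj d * a = 1 \<and> cnj b * d + cnj d * b = 0"

definition mobius :: "quat \<Rightarrow> quat \<Rightarrow> quat \<Rightarrow> quat \<Rightarrow> quat \<Rightarrow> quat" where
  "mobius a b c d q = (a * q + b) * inverse (c * q + d)"

definition halfspace :: "quat set" where
  "halfspace = {q. Re q > 0}"

text \<open>Generators: \<open>T(q) = q^{-1}\<close> and translations by purely imaginary Lipschitz integers.
  The generating set is closed under inverses (\<open>T\<close> is an involution, the inverse of the
  translation by \<open>w\<close> is the translation by \<open>-w\<close>), so the closure under composition
  containing the identity is the generated group.\<close>
inductive_set PSL2L :: "(quat \<Rightarrow> quat) set" where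
  id: "id \<in> PSL2L"
| T: "f \<in> PSL2L \<Longrightarrow> inverse \<circ> f \<in> PSL2L"
| trans: "f \<in> PSL2L \<Longrightarrow> lipschitz_imag w \<Longrightarrow> (\<lambda>q. q + w) \<circ> f \<in> PSL2L"

end

theory Submission
  imports Defs
begin

text \<open>Euclid's algorithm in the Lipschitz integers. If \<open>c = 0\<close>, (BG) forces \<open>d = a\<close> with \<open>a\<close> a
  Lipschitz unit, and the map is \<open>q \<mapsto> a q a\<inverse> + w\<close>; the units \<open>\<plusminus>1\<close> act trivially and a purely
  imaginary unit \<open>u\<close> acts by \<open>q \<mapsto> -u q u\<close>, which is the cube of \<open>q \<mapsto> q\<inverse> + u\<close>. If \<open>c \<noteq> 0\<close>, (BG)
  makes \<open>a c\<inverse>\<close> purely imaginary, so rounding its coordinates gives a purely imaginary Lipschitz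
  integer \<open>w\<close> with \<open>|a c\<inverse> - w|\<^sup>2 \<le> 3/4\<close>. Then \<open>(a q + b)(c q + d)\<inverse> = w + ((c q + d)(a' q + b')\<inverse>)\<inverse>\<close>
  with \<open>a' = a - w c\<close>, \<open>b' = b - w d\<close>; the new matrix again satisfies (BG) and \<open>|a'|\<^sup>2 < |c|\<^sup>2\<close>,
  so induction on the integer \<open>|c|\<^sup>2\<close> concludes.\<close>

lemma cnj_add [simp]: "cnj (x + y) = cnj x + cnj y"
  by (simp add: cnj_def plus_quat_def)

lemma cnj_diff [simp]: "cnj (x - y) = cnj x - cnj y"
  by (simp add: cnj_def minus_quat_def)

lemma cnj_uminus [simp]: "cnj (- x) = - cnj x"
  by (simp add: cnj_def uminus_quat_def)

lemma cnj_mult [simp]: "cnj (x * y) = cnj y * cnj x"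
  by (simp add: cnj_def times_quat_def quat_eq_iff algebra_simps)

lemma cnj_cnj [simp]: "cnj (cnj x) = x"
  by (simp add: cnj_def quat_eq_iff)

lemma cnj_one [simp]: "cnj 1 = 1"
  by (simp add: cnj_def one_quat_def)

lemma cnj_zero [simp]: "cnj 0 = 0"
  by (simp add: cnj_def zero_quat_def)

lemma cnj_pure_imag: "Re w = 0 \<Longrightarrow> cnj w = - w"
  by (simp add: cnj_def uminus_quat_def quat_eq_iff)

lemma mult_cnj_self: "x * cnj x = Quat (qnorm2 x) 0 0 0"
  by (simp add: cnj_def times_quat_def qnorm2_def power2_eq_square algebra_simps)

lemma qnorm2_mult: "qnorm2 (x * y) = qnorm2 x * qnorm2 y"
  by (simp add: qnorm2_def times_quat_def power2_eq_square algebra_simps)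

lemma qnorm2_cnj [simp]: "qnorm2 (cnj x) = qnorm2 x"
  by (simp add: qnorm2_def cnj_def)

lemma qnorm2_nonneg: "qnorm2 x \<ge> 0"
  by (simp add: qnorm2_def)

lemma qnorm2_pos: "x \<noteq> 0 \<Longrightarrow> qnorm2 x > 0"
proof -
  assume "x \<noteq> 0"
  then have "qnorm2 x \<noteq> 0"
    by (auto simp: qnorm2_def quat_eq_iff zero_quat_def add_nonneg_eq_0_iff)
  then show ?thesis
    using qnorm2_nonneg[of x] by linarith
qed

lemma Re_cnj_mult: "Re (cnj x * y) = Re x * Re y + Im1 x * Im1 y + Im2 x * Im2 y + Im3 x * Im3 y"
  by (simp add: cnj_def times_quat_def)

lemma Re_mult_inverse: "Re (x * inverse y) = Re (cnj y * x) / qnorm2 y"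
  by (simp add: cnj_def times_quat_def inverse_quat_def add_divide_distrib algebra_simps)

lemma lipschitz_diff: "lipschitz x \<Longrightarrow> lipschitz y \<Longrightarrow> lipschitz (x - y)"
  by (simp add: lipschitz_def minus_quat_def)

lemma lipschitz_mult: "lipschitz x \<Longrightarrow> lipschitz y \<Longrightarrow> lipschitz (x * y)"
  by (simp add: lipschitz_def times_quat_def)

lemma lipschitz_cnj: "lipschitz x \<Longrightarrow> lipschitz (cnj x)"
  by (simp add: lipschitz_def cnj_def)

lemma lipschitz_qnorm2_nat: "lipschitz x \<Longrightarrow> \<exists>n. qnorm2 x = real n"
proof -
  assume "lipschitz x"
  then have "qnorm2 x \<in> \<int>"
    by (simp add: lipschitz_def qnorm2_def)
  then obtain k where "qnorm2 x = of_int k"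
    by (auto elim: Ints_cases)
  moreover have "k \<ge> 0"
    using calculation qnorm2_nonneg[of x] by simp
  ultimately show ?thesis
    by (metis of_nat_nat of_int_of_nat_eq)
qed

lemma lipschitz_qnorm2_ge_1: "lipschitz x \<Longrightarrow> x \<noteq> 0 \<Longrightarrow> qnorm2 x \<ge> 1"
  using lipschitz_qnorm2_nat qnorm2_pos by fastforce

lemma lipschitz_unit_cases:
  assumes "lipschitz a" "qnorm2 a = 1"
  shows "Re a = 0 \<or> a = 1 \<or> a = -1"
proof (cases "Re a = 0")
  case False
  then have "\<bar>Re a\<bar> \<ge> 1"
    using assms(1) by (simp add: lipschitz_def Ints_nonzero_abs_ge1)
  then have "(Re a)\<^sup>2 \<ge> 1"
    by (metis abs_ge_self abs_le_square_iff abs_one order_trans power_one)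
  moreover have "(Re a)\<^sup>2 + ((Im1 a)\<^sup>2 + (Im2 a)\<^sup>2 + (Im3 a)\<^sup>2) = 1"
    using assms(2) by (simp add: qnorm2_def add.assoc)
  ultimately have "(Re a)\<^sup>2 = 1" "(Im1 a)\<^sup>2 + (Im2 a)\<^sup>2 + (Im3 a)\<^sup>2 = 0"
    by (smt (verit) zero_le_power2)+
  then show ?thesis
    by (auto simp: quat_eq_iff one_quat_def uminus_quat_def add_nonneg_eq_0_iff power2_eq_1_iff)
qed simp

lemma continued_fraction_step:
  fixes x y w :: "'a :: division_ring"
  assumes "y \<noteq> 0"
  shows "inverse (y * inverse (x - w * y)) + w = x * inverse y"
proof (cases "x - w * y = 0")
  case True
  then show ?thesis
    using assms by (simp add: mult.assoc)
next
  case False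
  have "inverse (y * inverse (x - w * y)) = (x - w * y) * inverse y"
    using False assms by (simp add: nonzero_inverse_mult_distrib)
  also have "\<dots> = x * inverse y - w"
    using assms by (simp add: algebra_simps mult.assoc)
  finally show ?thesis
    by simp
qed

lemma inverse_add_cubed:
  fixes u q :: "'a :: division_ring"
  assumes uu: "u * u = -1" and q: "q \<noteq> 0" and nz: "1 + u * q \<noteq> 0"
  shows "inverse (inverse (inverse q + u) + u) + u = - (u * q * u)"
proof -
  have u0: "u \<noteq> 0"
    using uu by auto
  have "inverse q + u = (1 + u * q) * inverse q"
    using q by (simp add: algebra_simps mult.assoc)
  then have "inverse (inverse q + u) = q * inverse (1 + u * q)"
    using q nz by (simp add: nonzero_inverse_mult_distrib)
  also have "\<dots> = (q + u * (1 + u * q)) * inverse (1 + u * q) - u"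
  proof -
    have "u * (1 + u * q) * inverse (1 + u * q) = u"
      using nz by (metis mult.assoc right_inverse mult_1_right)
    then show ?thesis
      by (simp only: distrib_right add_diff_cancel)
  qed
  finally have "inverse (inverse q + u) + u = (q + u * (1 + u * q)) * inverse (1 + u * q)"
    by simp
  also have "q + u * (1 + u * q) = u"
    using uu by (simp add: algebra_simps flip: mult.assoc)
  finally have "inverse (inverse (inverse q + u) + u) = (1 + u * q) * inverse u"
    using nz u0 by (simp add: nonzero_inverse_mult_distrib)
  also have "inverse u = - u"
    using uu by (metis add.inverse_inverse inverse_unique minus_mult_right)
  finally show ?thesis
    by (simp add: distrib_right)
qed

lemma PSL2L_inverse: "f \<in> PSL2L \<Longrightarrow> (\<lambda>q. inverse (f q)) \<in> PSL2L"
  using PSL2L.T by (simp add: comp_def)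

lemma PSL2L_translate: "f \<in> PSL2L \<Longrightarrow> lipschitz_imag w \<Longrightarrow> (\<lambda>q. f q + w) \<in> PSL2L"
  using PSL2L.trans by (simp add: comp_def)

lemma PSL2L_ident: "(\<lambda>q. q) \<in> PSL2L"
  using PSL2L.id by (simp add: id_def)

lemma PSL2L_unit_conjugation:
  assumes "lipschitz_imag u" "u * u = -1"
  shows "\<exists>f\<in>PSL2L. \<forall>q\<in>halfspace. f q = - (u * q * u)"
proof
  let ?f = "\<lambda>q. inverse (inverse (inverse q + u) + u) + u"
  show "?f \<in> PSL2L"
    using assms(1) by (intro PSL2L_translate PSL2L_inverse PSL2L_ident)
  show "\<forall>q\<in>halfspace. ?f q = - (u * q * u)"
  proof
    fix q
    assume "q \<in> halfspace"
    then have "Re q > 0"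
      by (simp add: halfspace_def)
    then have "q \<noteq> 0"
      by (auto simp: zero_quat_def)
    have "1 + u * q \<noteq> 0"
    proof
      assume "1 + u * q = 0"
      moreover have "u * (1 + u * q) = u - q"
        using assms(2) by (simp add: algebra_simps flip: mult.assoc)
      ultimately have "q = u"
        by simp
      then show False
        using \<open>Re q > 0\<close> assms(1) by (simp add: lipschitz_imag_def)
    qed
    with \<open>q \<noteq> 0\<close> show "?f q = - (u * q * u)"
      using inverse_add_cubed[OF assms(2)] by blast
  qed
qed

lemma BG_Re_cnj_mult: "BG a b c d \<Longrightarrow> Re (cnj c * a) = 0"
  by (simp add: BG_def Re_cnj_mult zero_quat_def plus_quat_def[of "cnj a * c"] algebra_simps)

lemma BG_denominator_nonzero:
  assumes "BG a b c d" "Re q > 0"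
  shows "c * q + d \<noteq> 0"
proof
  assume "c * q + d = 0"
  moreover have "cnj (a * q + b) * (c * q + d) + cnj (c * q + d) * (a * q + b) =
      cnj q * (cnj a * c + cnj c * a) * q + cnj q * (cnj a * d + cnj c * b)
      + (cnj b * c + cnj d * a) * q + (cnj b * d + cnj d * b)"
    by (simp add: algebra_simps)
  ultimately have "cnj q + q = 0"
    using assms(1) by (simp add: BG_def)
  then show False
    using assms(2) by (simp add: cnj_def plus_quat_def zero_quat_def)
qed

lemma BG_translate:
  assumes "BG a b c d" "Re w = 0"
  shows "BG c d (a - w * c) (b - w * d)"
  using assms by (simp add: BG_def cnj_pure_imag algebra_simps)

lemma mobius_translate_invert:
  assumes "c * q + d \<noteq> 0"
  shows "mobius a b c d q = inverse (mobius c d (a - w * c) (b - w * d) q) + w"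
proof -
  have "(a - w * c) * q + (b - w * d) = (a * q + b) - w * (c * q + d)"
    by (simp add: algebra_simps)
  then show ?thesis
    unfolding mobius_def using continued_fraction_step[OF assms] by metis
qed

lemma BG_lower_triangular:
  assumes "lipschitz a" "lipschitz d" "BG a b 0 d"
  shows "d = a" "a * cnj a = 1"
proof -
  have da: "cnj d * a = 1"
    using assms(3) by (simp add: BG_def)
  then have "qnorm2 (cnj d * a) = 1"
    by (simp add: qnorm2_def one_quat_def)
  then have "qnorm2 d * qnorm2 a = 1"
    by (simp add: qnorm2_mult)
  moreover have "qnorm2 a \<ge> 1" "qnorm2 d \<ge> 1"
    using da assms(1,2) by (auto intro: lipschitz_qnorm2_ge_1)
  moreover have "1 * qnorm2 a \<le> qnorm2 d * qnorm2 a"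
    using calculation(2,3) by (intro mult_right_mono) auto
  ultimately have "qnorm2 a = 1"
    by linarith
  then show unit: "a * cnj a = 1"
    by (simp add: mult_cnj_self one_quat_def)
  have "cnj d = cnj d * a * cnj a"
    using unit by (simp add: mult.assoc)
  then have "cnj d = cnj a"
    using da by simp
  then show "d = a"
    by (metis cnj_cnj)
qed

lemma mobius_lower_triangular_in_PSL2L:
  assumes "lipschitz a" "lipschitz b" "lipschitz d" "BG a b 0 d"
  shows "\<exists>f\<in>PSL2L. \<forall>q\<in>halfspace. mobius a b 0 d q = f q"
proof -
  have "d = a" and unit: "a * cnj a = 1"
    using BG_lower_triangular[OF assms(1,3,4)] by auto
  define w where "w = b * cnj a"
  have "cnj b * a + cnj a * b = 0"
    using assms(4) \<open>d = a\<close> by (simp add: BG_def)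
  then have "Re w = 0"
    unfolding w_def by (simp add: quat_eq_iff cnj_def times_quat_def plus_quat_def zero_quat_def algebra_simps)
  then have w: "lipschitz_imag w"
    using assms(1,2) by (simp add: lipschitz_imag_def w_def lipschitz_mult lipschitz_cnj)
  have mob: "mobius a b 0 d q = a * q * cnj a + w" for q
    using unit inverse_unique[OF unit] by (simp add: mobius_def \<open>d = a\<close> w_def algebra_simps)
  have "qnorm2 a = 1"
    using unit by (simp add: mult_cnj_self one_quat_def)
  then consider "Re a = 0" | "a = 1 \<or> a = -1"
    using lipschitz_unit_cases[OF assms(1)] by blast
  then show ?thesis
  proof cases
    case 1
    then have "cnj a = - a"
      by (rule cnj_pure_imag)
    then have "a * a = -1"
      using unit by (simp add: minus_equation_iff[of "a * a"])
    moreover have "lipschitz_imag a"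
      using assms(1) 1 by (simp add: lipschitz_imag_def)
    ultimately obtain f where "f \<in> PSL2L" "\<forall>q\<in>halfspace. f q = - (a * q * a)"
      using PSL2L_unit_conjugation by blast
    then show ?thesis
      using w \<open>cnj a = - a\<close> by (intro bexI[of _ "\<lambda>q. f q + w"] PSL2L_translate) (auto simp: mob)
  next
    case 2
    then have "mobius a b 0 d q = q + w" for q
      by (auto simp: mob)
    then show ?thesis
      using w by (intro bexI[of _ "\<lambda>q. q + w"] PSL2L_translate PSL2L_ident) auto
  qed
qed

lemma lipschitz_imag_nearest:
  assumes "Re p = 0"
  shows "\<exists>w. lipschitz_imag w \<and> qnorm2 (p - w) \<le> 3/4"
proof -
  define w where "w = Quat 0 (of_int (round (Im1 p))) (of_int (round (Im2 p))) (of_int (round (Im3 p)))"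
  have round_sq: "(t - of_int (round t))\<^sup>2 \<le> 1/4" for t :: real
  proof -
    have "\<bar>t - of_int (round t)\<bar> \<le> 1/2"
      using of_int_round_abs_le[of t] by (simp add: abs_minus_commute)
    then have "\<bar>t - of_int (round t)\<bar>\<^sup>2 \<le> (1/2)\<^sup>2"
      by (intro power_mono) auto
    then show ?thesis
      by (simp add: power2_eq_square)
  qed
  have "lipschitz_imag w"
    by (simp add: w_def lipschitz_imag_def lipschitz_def)
  moreover have "qnorm2 (p - w) \<le> 3/4"
    using assms round_sq[of "Im1 p"] round_sq[of "Im2 p"] round_sq[of "Im3 p"]
    by (simp add: qnorm2_def w_def minus_quat_def)
  ultimately show ?thesis
    by blast
qed

lemma BG_euclidean_step:
  assumes "c \<noteq> 0" "BG a b c d"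
  shows "\<exists>w. lipschitz_imag w \<and> qnorm2 (a - w * c) < qnorm2 c"
proof -
  define p where "p = a * inverse c"
  have "Re p = 0"
    using BG_Re_cnj_mult[OF assms(2)] by (simp add: p_def Re_mult_inverse)
  then obtain w where w: "lipschitz_imag w" "qnorm2 (p - w) \<le> 3/4"
    using lipschitz_imag_nearest by blast
  have "a - w * c = (p - w) * c"
    using assms(1) by (simp add: p_def algebra_simps mult.assoc)
  then have "qnorm2 (a - w * c) = qnorm2 (p - w) * qnorm2 c"
    by (simp add: qnorm2_mult)
  also have "\<dots> \<le> 3/4 * qnorm2 c"
    using w(2) qnorm2_nonneg[of c] by (rule mult_right_mono)
  also have "\<dots> < qnorm2 c"
    using qnorm2_pos[OF assms(1)] by simp
  finally show ?thesis
    using w(1) by blast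
qed

lemma mobius_in_PSL2L_of_qnorm2_eq:
  assumes "qnorm2 c = real n" "lipschitz a" "lipschitz b" "lipschitz c" "lipschitz d" "BG a b c d"
  shows "\<exists>f\<in>PSL2L. \<forall>q\<in>halfspace. mobius a b c d q = f q"
  using assms
proof (induction n arbitrary: a b c d rule: less_induct)
  case (less n)
  show ?case
  proof (cases "c = 0")
    case True
    then show ?thesis
      using mobius_lower_triangular_in_PSL2L less.prems by simp
  next
    case False
    obtain w where w: "lipschitz_imag w" and smaller: "qnorm2 (a - w * c) < qnorm2 c"
      using BG_euclidean_step[OF False less.prems(6)] by blast
    have "lipschitz (a - w * c)" "lipschitz (b - w * d)"
      using less.prems w by (simp_all add: lipschitz_imag_def lipschitz_diff lipschitz_mult)
    moreover have "BG c d (a - w * c) (b - w * d)"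
      using BG_translate less.prems(6) w by (simp add: lipschitz_imag_def)
    moreover obtain m where m: "qnorm2 (a - w * c) = real m"
      using lipschitz_qnorm2_nat calculation(1) by blast
    ultimately obtain f where f: "f \<in> PSL2L"
        "\<forall>q\<in>halfspace. mobius c d (a - w * c) (b - w * d) q = f q"
      using less.IH[of m] less.prems smaller by fastforce
    have "mobius a b c d q = inverse (f q) + w" if "q \<in> halfspace" for q
    proof -
      have "c * q + d \<noteq> 0"
        using that BG_denominator_nonzero[OF less.prems(6)] by (simp add: halfspace_def)
      then show ?thesis
        using that f(2) by (simp add: mobius_translate_invert[where w = w])
    qed
    then show ?thesis
      using f(1) w by (intro bexI[of _ "\<lambda>q. inverse (f q) + w"] ballI PSL2L_translate PSL2L_inverse)
  qed
qed

theorem mainTheorem10: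
  fixes a b c d :: quat
  assumes "lipschitz a" "lipschitz b" "lipschitz c" "lipschitz d"
    and "BG a b c d"
  shows "\<exists>f\<in>PSL2L. \<forall>q\<in>halfspace. mobius a b c d q = f q"
  using lipschitz_qnorm2_nat[OF assms(3)] mobius_in_PSL2L_of_qnorm2_eq assms by blast

end
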